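(* Let $X$ be a topological space and $M$ a maximal ideal of $B_1(X)$. The following are equivalent: (1) $M$ is real; (2) $Z_B[M]$ is closed under countable intersections; (3) $Z_B[M]$ has the countable intersection property (every countable subfamily has nonempty intersection).
   Context: For a topological space $X$, $B_1(X)$ denotes the lattice-ordered ring (pointwise operations and order) of all Baire one functions $f:X\to\mathbb{R}$, i.e. pointwise limits of sequences of continuous real-valued functions. For $f$, $Z(f)=\{x: f(x)=0\}$; for an ideal $I$, $Z_B[I]=\{Z(f): f\in I\}$. For a maximal ideal $M$, $M(f)=f+M$; $B_1(X)/M$ is a totally ordered field and $\Phi:\mathbb{R}\to B_1(X)/M$, $\Phi(r)=M(\mathbf r)$ ($\mathbf r$ the constant function $r$), is an order-preserving embedding. $M$ is real if $\Phi(\mathbb{R})=B_1(X)/M$, and hyper-real otherwise. *)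

theory Defs
  imports "HOL-Analysis.Analysis" "HOL-Algebra.QuotRing"
begin

text \<open>Real-valued functions on the topological space X are represented as functions
  on the whole type that vanish outside topspace X (so that each function on X has a
  unique representative and the pointwise operations stay inside this convention).\<close>

definition baire_one :: "'a topology \<Rightarrow> ('a \<Rightarrow> real) set" where
  "baire_one X = {f. (\<forall>x. x \<notin> topspace X \<longrightarrow> f x = 0) \<and>
     (\<exists>g :: nat \<Rightarrow> 'a \<Rightarrow> real. (\<forall>n. continuous_map X euclideanreal (g n)) \<and>
        (\<forall>x\<in>topspace X. (\<lambda>n. g n x) \<longlonglongrightarrow> f x))}"

definition const_fun :: "'a topology \<Rightarrow> real \<Rightarrow> 'a \<Rightarrow> real" where
  "const_fun X r = (\<lambda>x. if x \<in> topspace X then r else 0)"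

definition B1_ring :: "'a topology \<Rightarrow> ('a \<Rightarrow> real) ring" where
  "B1_ring X = \<lparr>carrier = baire_one X,
                monoid.mult = (\<lambda>f g x. f x * g x),
                one = const_fun X 1,
                zero = (\<lambda>x. 0),
                add = (\<lambda>f g x. f x + g x)\<rparr>"

definition zero_set :: "'a topology \<Rightarrow> ('a \<Rightarrow> real) \<Rightarrow> 'a set" where
  "zero_set X f = {x \<in> topspace X. f x = 0}"

definition real_max_ideal :: "'a topology \<Rightarrow> ('a \<Rightarrow> real) set \<Rightarrow> bool" where
  "real_max_ideal X M \<longleftrightarrow>
     carrier (B1_ring X Quot M) \<subseteq> (\<lambda>r. M +>\<^bsub>B1_ring X\<^esub> const_fun X r) ` UNIV"

end

theory Submission
  imports Defs
begin

(*
  For f_n \<in> M, the zero set of g = \<Sum> 2^-n min(|f_n|, 1), again a Baire one function, is the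
  intersection of the Z(f_n). If M is real then g - r \<in> M for a constant r; since Z(g - r) meets
  each Z(f_0) \<inter> ... \<inter> Z(f_(N-1)), on which g \<le> 2^(1-N), we get r = 0 and g \<in> M.

  Conversely, as M is prime and min(f - q, 0) * max(f - q, 0) = 0, for every rational q one of the
  level sets {f \<ge> q}, {f \<le> q} lies in Z_B[M]. By density of the rationals f takes a single value c
  on the intersection of these countably many sets. If f - c \<notin> M then m + h (f - c) = 1 for some
  m \<in> M, so Z(m) misses {f = c}, and adding Z(m) to the family gives an empty countable intersection.
*)

lemma B1_ring_simps [simp]:
  "carrier (B1_ring X) = baire_one X"
  "\<one>\<^bsub>B1_ring X\<^esub> = const_fun X 1"
  "\<zero>\<^bsub>B1_ring X\<^esub> = (\<lambda>x. 0)"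
  "f \<oplus>\<^bsub>B1_ring X\<^esub> g = (\<lambda>x. f x + g x)"
  "f \<otimes>\<^bsub>B1_ring X\<^esub> g = (\<lambda>x. f x * g x)"
  by (simp_all add: B1_ring_def)

lemma baire_oneE:
  assumes "f \<in> baire_one X"
  obtains g where "\<And>n. continuous_map X euclideanreal (g n)"
    "\<And>x. x \<in> topspace X \<Longrightarrow> (\<lambda>n. g n x) \<longlonglongrightarrow> f x"
    "\<And>x. x \<notin> topspace X \<Longrightarrow> f x = 0"
  using assms unfolding baire_one_def by blast

lemma baire_oneI:
  assumes "\<And>n. continuous_map X euclideanreal (g n)"
    "\<And>x. x \<in> topspace X \<Longrightarrow> (\<lambda>n. g n x) \<longlonglongrightarrow> f x"
    "\<And>x. x \<notin> topspace X \<Longrightarrow> f x = 0"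
  shows "f \<in> baire_one X"
  using assms unfolding baire_one_def by blast

lemma baire_one_outside: "f \<in> baire_one X \<Longrightarrow> x \<notin> topspace X \<Longrightarrow> f x = 0"
  by (simp add: baire_one_def)

lemma baire_one_const: "const_fun X r \<in> baire_one X"
  by (rule baire_oneI[where g="\<lambda>n x. r"]) (auto simp: const_fun_def)

lemma baire_one_compose:
  assumes "f \<in> baire_one X" "continuous_on UNIV \<phi>" "\<phi> 0 = 0"
  shows "(\<lambda>x. \<phi> (f x)) \<in> baire_one X"
proof -
  obtain a where a: "\<And>n. continuous_map X euclideanreal (a n)"
    "\<And>x. x \<in> topspace X \<Longrightarrow> (\<lambda>n. a n x) \<longlonglongrightarrow> f x" "\<And>x. x \<notin> topspace X \<Longrightarrow> f x = 0"
    using baire_oneE[OF assms(1)] by blast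
  have \<phi>: "continuous_map euclideanreal euclideanreal \<phi>" using assms(2) by simp
  show ?thesis
  proof (rule baire_oneI[where g="\<lambda>n x. \<phi> (a n x)"])
    show "continuous_map X euclideanreal (\<lambda>x. \<phi> (a n x))" for n
      using continuous_map_compose[OF a(1) \<phi>] by (simp add: o_def)
    show "(\<lambda>n. \<phi> (a n x)) \<longlonglongrightarrow> \<phi> (f x)" if "x \<in> topspace X" for x
      using assms(2) a(2)[OF that] by (metis UNIV_I continuous_on_eq_continuous_at open_UNIV isCont_tendsto_compose)
  qed (use a assms in auto)
qed

lemma baire_one_diff:
  assumes "f \<in> baire_one X" "g \<in> baire_one X"
  shows "(\<lambda>x. f x - g x) \<in> baire_one X"
proof -
  obtain a where a: "\<And>n. continuous_map X euclideanreal (a n)"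
    "\<And>x. x \<in> topspace X \<Longrightarrow> (\<lambda>n. a n x) \<longlonglongrightarrow> f x" "\<And>x. x \<notin> topspace X \<Longrightarrow> f x = 0"
    using baire_oneE[OF assms(1)] by blast
  obtain b where b: "\<And>n. continuous_map X euclideanreal (b n)"
    "\<And>x. x \<in> topspace X \<Longrightarrow> (\<lambda>n. b n x) \<longlonglongrightarrow> g x" "\<And>x. x \<notin> topspace X \<Longrightarrow> g x = 0"
    using baire_oneE[OF assms(2)] by blast
  show ?thesis
    by (rule baire_oneI[where g="\<lambda>n x. a n x - b n x"]) (auto simp: a b intro: continuous_map_diff tendsto_diff)
qed

lemma baire_one_inverse:
  assumes "f \<in> baire_one X" "\<And>x. x \<in> topspace X \<Longrightarrow> f x \<noteq> 0"
  shows "(\<lambda>x. 1 / f x) \<in> baire_one X"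
proof -
  obtain a where a: "\<And>n. continuous_map X euclideanreal (a n)"
    "\<And>x. x \<in> topspace X \<Longrightarrow> (\<lambda>n. a n x) \<longlonglongrightarrow> f x" "\<And>x. x \<notin> topspace X \<Longrightarrow> f x = 0"
    using baire_oneE[OF assms(1)] by blast
  text \<open>The regularised reciprocals \<open>t / (t\<^sup>2 + 1/(n+1))\<close> are continuous and tend to
    \<open>1/t\<close> for \<open>t \<noteq> 0\<close>.\<close>
  show ?thesis
  proof (rule baire_oneI[where g="\<lambda>n x. a n x / ((a n x)^2 + 1 / Suc n)"])
    show "continuous_map X euclideanreal (\<lambda>x. a n x / ((a n x)^2 + 1 / Suc n))" for n
      by (intro continuous_map_real_divide continuous_map_add continuous_map_real_pow a(1)
          continuous_map_const[THEN iffD2])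
        (auto simp: add_nonneg_pos add_pos_nonneg less_imp_neq[symmetric])
    show "(\<lambda>n. a n x / ((a n x)^2 + 1 / Suc n)) \<longlonglongrightarrow> 1 / f x" if "x \<in> topspace X" for x
    proof -
      have "(\<lambda>n. a n x / ((a n x)^2 + 1 / Suc n)) \<longlonglongrightarrow> f x / ((f x)^2 + 0)"
        by (intro tendsto_intros a(2) that lim_1_over_n[THEN LIMSEQ_Suc]) (use assms(2) that in simp)
      moreover have "f x / ((f x)^2 + 0) = 1 / f x"
        using assms(2)[OF that] by (simp add: power2_eq_square)
      ultimately show ?thesis by simp
    qed
  qed (use a in auto)
qed

definition dyadic_series :: "(nat \<Rightarrow> 'a \<Rightarrow> real) \<Rightarrow> 'a \<Rightarrow> real" where
  "dyadic_series fs x = (\<Sum>n. (1/2)^n * min \<bar>fs n x\<bar> 1)"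

lemma dyadic_series_terms_bounded:
  "0 \<le> (1/2::real)^n * min \<bar>fs n x\<bar> 1 \<and> (1/2::real)^n * min \<bar>fs n x\<bar> 1 \<le> (1/2)^n"
  by (simp add: mult_left_le)

lemma summable_dyadic_series: "summable (\<lambda>n. (1/2::real)^n * min \<bar>fs n x\<bar> 1)"
  by (rule summable_comparison_test[OF _ summable_geometric[of "1/2::real"]])
    (use dyadic_series_terms_bounded in auto)

lemma dyadic_series_eq_0_iff: "dyadic_series fs x = 0 \<longleftrightarrow> (\<forall>n. fs n x = 0)"
proof -
  have "(1/2::real)^n * min \<bar>fs n x\<bar> 1 = 0 \<longleftrightarrow> fs n x = 0" for n
    by (auto simp: min_def split: if_splits)
  moreover have "dyadic_series fs x = 0 \<longleftrightarrow> (\<forall>n. (1/2::real)^n * min \<bar>fs n x\<bar> 1 = 0)"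
    unfolding dyadic_series_def
    by (rule suminf_eq_zero_iff[OF summable_dyadic_series]) (use dyadic_series_terms_bounded in auto)
  ultimately show ?thesis by simp
qed

lemma dyadic_series_nonneg: "0 \<le> dyadic_series fs x"
  unfolding dyadic_series_def
  by (rule suminf_nonneg[OF summable_dyadic_series]) (use dyadic_series_terms_bounded in auto)

lemma dyadic_series_le_if_initial_zero:
  assumes "\<And>n. n < N \<Longrightarrow> fs n x = 0"
  shows "dyadic_series fs x \<le> 2 * (1/2)^N"
proof -
  define t where "t n = (1/2::real)^n * min \<bar>fs n x\<bar> 1" for n
  have "dyadic_series fs x = (\<Sum>n. t (n + N)) + (\<Sum>n<N. t n)"
    unfolding dyadic_series_def t_def by (rule suminf_split_initial_segment[OF summable_dyadic_series])
  also have "(\<Sum>n<N. t n) = 0" using assms by (simp add: t_def)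
  also have "(\<Sum>n. t (n + N)) \<le> (\<Sum>n. (1/2::real)^(n + N))"
    using summable_ignore_initial_segment[OF summable_dyadic_series]
      summable_ignore_initial_segment[OF summable_geometric[of "1/2::real"]]
    by (intro suminf_le) (auto simp: t_def dyadic_series_terms_bounded)
  also have "(\<Sum>n. (1/2::real)^(n + N)) = 2 * (1/2)^N"
    by (simp add: power_add suminf_mult2[symmetric, OF summable_geometric] suminf_geometric)
  finally show ?thesis by simp
qed

lemma baire_one_dyadic_series:
  assumes "\<And>n. fs n \<in> baire_one X"
  shows "dyadic_series fs \<in> baire_one X"
proof -
  have "\<forall>n. \<exists>a. (\<forall>k. continuous_map X euclideanreal (a k)) \<and>
    (\<forall>x\<in>topspace X. (\<lambda>k. a k x) \<longlonglongrightarrow> fs n x)"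
    using assms unfolding baire_one_def by blast
  then obtain a where a: "\<And>n k. continuous_map X euclideanreal (a n k)"
    "\<And>n x. x \<in> topspace X \<Longrightarrow> (\<lambda>k. a n k x) \<longlonglongrightarrow> fs n x"
    by metis
  define w where "w n t = (1/2)^n * min \<bar>t\<bar> (1::real)" for n t
  have w: "continuous_on UNIV (w n)" for n
    unfolding w_def by (intro continuous_intros)
  text \<open>Approximate by the partial sums of the series built from the \<open>k\<close>-th approximants;
    Tannery's theorem lets the limit pass through the dominated series.\<close>
  show ?thesis
  proof (rule baire_oneI[where g="\<lambda>k x. \<Sum>n<k. w n (a n k x)"])
    show "continuous_map X euclideanreal (\<lambda>x. \<Sum>n<k. w n (a n k x))" for k
    proof (rule continuous_map_sum)
      show "continuous_map X euclideanreal (\<lambda>x. w n (a n k x))" for n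
        using continuous_map_compose[OF a(1), where g="w n"] w[of n] by (simp add: o_def)
    qed simp
    show "(\<lambda>k. \<Sum>n<k. w n (a n k x)) \<longlonglongrightarrow> dyadic_series fs x" if x: "x \<in> topspace X" for x
    proof -
      define b where "b n k = (if n < k then w n (a n k x) else 0)" for n k
      have lim: "(\<lambda>k. b n k) \<longlonglongrightarrow> w n (fs n x)" for n
      proof (rule Lim_transform_eventually)
        show "(\<lambda>k. w n (a n k x)) \<longlonglongrightarrow> w n (fs n x)"
          using w[of n] a(2)[OF x, of n]
          by (metis UNIV_I continuous_on_eq_continuous_at open_UNIV isCont_tendsto_compose)
        show "\<forall>\<^sub>F k in sequentially. w n (a n k x) = b n k"
          using eventually_gt_at_top[of n] by eventually_elim (simp add: b_def)
      qed
      have bound: "\<forall>\<^sub>F (n, k) in at_top \<times>\<^sub>F sequentially. norm (b n k) \<le> (1/2)^n"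
        by (rule always_eventually) (auto simp: b_def w_def abs_mult mult_left_le)
      have "suminf (\<lambda>n. b n k) = (\<Sum>n<k. w n (a n k x))" for k
        by (subst suminf_finite[of "{..<k}"]) (auto simp: b_def)
      then show ?thesis
        using tannerys_theorem[OF lim bound summable_geometric] by (simp add: dyadic_series_def w_def)
    qed
    show "dyadic_series fs x = 0" if "x \<notin> topspace X" for x
      using assms that by (simp add: dyadic_series_eq_0_iff baire_one_def)
  qed
qed

context
  fixes X :: "'a topology" and M :: "('a \<Rightarrow> real) set"
  assumes maximal: "maximalideal M (B1_ring X)"
begin

lemma ideal_max_ideal: "ideal M (B1_ring X)"
  using maximal by (simp add: maximalideal_def)

lemma cring_B1_ring: "cring (B1_ring X)"
proof -
  \<comment> \<open>the ring axioms are part of the hypothesis \<open>maximalideal M (B1_ring X)\<close>\<close>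
  have "ring (B1_ring X)" using ideal_max_ideal by (simp add: ideal_def)
  then show ?thesis
    by (intro cring.intro comm_monoid.intro comm_monoid_axioms.intro)
      (auto simp: ring_def mult.commute B1_ring_def)
qed

lemma max_ideal_baire_one: "m \<in> M \<Longrightarrow> m \<in> baire_one X"
  using ideal.Icarr[OF ideal_max_ideal] by simp

lemma max_ideal_zero: "(\<lambda>x. 0) \<in> M"
  using additive_subgroup.zero_closed[OF ideal.axioms(1)[OF ideal_max_ideal]] by simp

lemma max_ideal_add: "m \<in> M \<Longrightarrow> n \<in> M \<Longrightarrow> (\<lambda>x. m x + n x) \<in> M"
  using additive_subgroup.a_closed[OF ideal.axioms(1)[OF ideal_max_ideal], of m n] by simp

lemma max_ideal_mult: "m \<in> M \<Longrightarrow> h \<in> baire_one X \<Longrightarrow> (\<lambda>x. h x * m x) \<in> M"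
  using ideal.I_l_closed[OF ideal_max_ideal, of m h] by simp

lemma max_ideal_sum_squares:
  fixes N :: nat
  shows "(\<And>n. n < N \<Longrightarrow> fs n \<in> M) \<Longrightarrow> (\<lambda>x. \<Sum>n<N. fs n x * fs n x) \<in> M"
proof (induction N)
  case 0
  then show ?case using max_ideal_zero by simp
next
  case (Suc N)
  then have "(\<lambda>x. (\<Sum>n<N. fs n x * fs n x) + fs N x * fs N x) \<in> M"
    by (intro max_ideal_add max_ideal_mult max_ideal_baire_one) auto
  then show ?case by simp
qed

text \<open>A function without zeros is invertible in \<open>B\<^sub>1(X)\<close>, so it lies in no proper ideal.\<close>
lemma max_ideal_has_zero: "m \<in> M \<Longrightarrow> \<exists>x\<in>topspace X. m x = 0"
proof (rule ccontr)
  assume m: "m \<in> M" and "\<not> (\<exists>x\<in>topspace X. m x = 0)"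
  then have nz: "\<And>x. x \<in> topspace X \<Longrightarrow> m x \<noteq> 0" by auto
  have "(\<lambda>x. 1 / m x * m x) \<in> M"
    by (rule max_ideal_mult[OF m baire_one_inverse[OF max_ideal_baire_one[OF m] nz]])
  moreover have "(\<lambda>x. 1 / m x * m x) = \<one>\<^bsub>B1_ring X\<^esub>"
    using nz baire_one_outside[OF max_ideal_baire_one[OF m]] by (auto simp: const_fun_def)
  ultimately have "M = carrier (B1_ring X)"
    using ideal.one_imp_carrier[OF ideal_max_ideal] by simp
  with maximalideal.I_notcarr[OF maximal] show False by simp
qed

lemma max_ideal_common_zero:
  assumes "m \<in> M" "n \<in> M"
  shows "\<exists>x\<in>topspace X. m x = 0 \<and> n x = 0"
proof -
  have "(\<lambda>x. m x * m x + n x * n x) \<in> M"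
    using assms by (intro max_ideal_add max_ideal_mult max_ideal_baire_one)
  then obtain x where "x \<in> topspace X" "m x * m x + n x * n x = 0"
    using max_ideal_has_zero by blast
  then show ?thesis by (auto simp: add_nonneg_eq_0_iff)
qed

lemma max_ideal_comaximal:
  assumes f: "f \<in> baire_one X" and "f \<notin> M"
  obtains m h where "m \<in> M" "h \<in> baire_one X" "\<And>x. x \<in> topspace X \<Longrightarrow> m x + h x * f x = 1"
proof -
  interpret cring "B1_ring X" by (rule cring_B1_ring)
  define J where "J = M <+>\<^bsub>B1_ring X\<^esub> PIdl\<^bsub>B1_ring X\<^esub> f"
  have fc: "f \<in> carrier (B1_ring X)" using f by simp
  have J: "ideal J (B1_ring X)"
    unfolding J_def by (rule add_ideals[OF ideal_max_ideal cgenideal_ideal[OF fc]])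
  have "(\<lambda>x. 0) \<in> PIdl\<^bsub>B1_ring X\<^esub> f"
    using additive_subgroup.zero_closed[OF ideal.axioms(1)[OF cgenideal_ideal[OF fc]]] by simp
  then have "M \<subseteq> J"
    unfolding J_def set_add_def' by force
  moreover have "f \<in> J"
    unfolding J_def set_add_def' using max_ideal_zero cgenideal_self[OF fc] by force
  ultimately have "J = carrier (B1_ring X)"
    using maximalideal.I_maximal[OF maximal J] ideal.Icarr[OF J] \<open>f \<notin> M\<close> by blast
  then have "const_fun X 1 \<in> J" using baire_one_const by simp
  then obtain m p where m: "m \<in> M" and p: "p \<in> PIdl\<^bsub>B1_ring X\<^esub> f"
    and e: "const_fun X 1 = (\<lambda>x. m x + p x)"
    unfolding J_def set_add_def' by auto
  from p obtain h where h: "h \<in> baire_one X" and ph: "p = (\<lambda>x. h x * f x)"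
    unfolding cgenideal_def by auto
  show thesis
  proof (rule that[OF m h])
    fix x assume "x \<in> topspace X"
    then show "m x + h x * f x = 1" using fun_cong[OF e, of x] ph by (simp add: const_fun_def)
  qed
qed

lemma max_ideal_prime:
  assumes a: "a \<in> baire_one X" and b: "b \<in> baire_one X" and ab: "(\<lambda>x. a x * b x) \<in> M"
  shows "a \<in> M \<or> b \<in> M"
proof (cases "a \<in> M")
  case False
  then obtain m h where m: "m \<in> M" and h: "h \<in> baire_one X"
    and e: "\<And>x. x \<in> topspace X \<Longrightarrow> m x + h x * a x = 1"
    using max_ideal_comaximal[OF a] by blast
  have "(\<lambda>x. b x * m x + h x * (a x * b x)) \<in> M"
    by (intro max_ideal_add max_ideal_mult m b h ab)
  moreover have "b x * m x + h x * (a x * b x) = b x" for x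
  proof -
    have "b x * m x + h x * (a x * b x) = b x * (m x + h x * a x)" by (simp add: algebra_simps)
    then show ?thesis using e[of x] baire_one_outside[OF b, of x] by (cases "x \<in> topspace X") auto
  qed
  ultimately show ?thesis by simp
qed simp

lemma real_max_ideal_iff:
  "real_max_ideal X M \<longleftrightarrow> (\<forall>f\<in>baire_one X. \<exists>r. (\<lambda>x. f x - const_fun X r x) \<in> M)"
proof -
  interpret ring "B1_ring X" using ideal_max_ideal by (simp add: ideal_def)
  have minus: "a \<ominus>\<^bsub>B1_ring X\<^esub> b = (\<lambda>x. a x - b x)"
    if "a \<in> baire_one X" "b \<in> baire_one X" for a b
  proof -
    have "(\<lambda>x. - b x) \<in> baire_one X"
      using baire_one_compose[OF that(2), of uminus] by (simp add: continuous_on_minus)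
    then have "\<ominus>\<^bsub>B1_ring X\<^esub> b = (\<lambda>x. - b x)"
      using that by (intro minus_equality) auto
    then show ?thesis by (simp add: a_minus_def)
  qed
  have same_coset: "M +>\<^bsub>B1_ring X\<^esub> f = M +>\<^bsub>B1_ring X\<^esub> const_fun X r \<longleftrightarrow>
      (\<lambda>x. f x - const_fun X r x) \<in> M" if "f \<in> baire_one X" for f r
    using quotient_eq_iff_same_a_r_cos[OF ideal_max_ideal, of f "const_fun X r"] that
      baire_one_const[of X r] minus[OF that baire_one_const[of X r]]
    by simp
  have "M +>\<^bsub>B1_ring X\<^esub> f \<in> range (\<lambda>r. M +>\<^bsub>B1_ring X\<^esub> const_fun X r) \<longleftrightarrow>
      (\<exists>r. (\<lambda>x. f x - const_fun X r x) \<in> M)" if "f \<in> baire_one X" for f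
    using same_coset[OF that] by (metis (no_types, lifting) rangeE rangeI)
  moreover have "carrier (B1_ring X Quot M) = (\<lambda>f. M +>\<^bsub>B1_ring X\<^esub> f) ` baire_one X"
    by (auto simp: FactRing_def A_RCOSETS_def')
  ultimately show ?thesis
    unfolding real_max_ideal_def by (simp add: image_subset_iff)
qed

lemma real_max_ideal_dyadic_series:
  assumes real: "real_max_ideal X M" and fs: "\<And>n. fs n \<in> M"
  shows "dyadic_series fs \<in> M"
proof -
  let ?g = "dyadic_series fs"
  have "?g \<in> baire_one X"
    by (rule baire_one_dyadic_series[OF max_ideal_baire_one[OF fs]])
  then obtain r where r: "(\<lambda>x. ?g x - const_fun X r x) \<in> M"
    using real real_max_ideal_iff by blast
  have r_bounds: "0 \<le> r \<and> r \<le> 2 * (1/2)^N" for N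
  proof -
    obtain x where x: "x \<in> topspace X" "(\<Sum>n<N. fs n x * fs n x) = 0" "?g x - const_fun X r x = 0"
      using max_ideal_common_zero[OF max_ideal_sum_squares r] fs by blast
    then have "fs n x = 0" if "n < N" for n
      using that sum_nonneg_eq_0_iff[of "{..<N}" "\<lambda>n. fs n x * fs n x"] by simp
    then have "?g x \<le> 2 * (1/2)^N"
      by (rule dyadic_series_le_if_initial_zero)
    moreover have "?g x = r" using x by (simp add: const_fun_def)
    ultimately show ?thesis using dyadic_series_nonneg[of fs x] by simp
  qed
  have "r = 0"
  proof (rule ccontr)
    assume "r \<noteq> 0"
    with r_bounds[of 0] have "r > 0" by linarith
    then obtain N where "(1/2::real)^N < r/2"
      using real_arch_pow_inv[of "r/2" "1/2"] by auto
    with r_bounds[of N] show False by simp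
  qed
  then show ?thesis using r by (simp add: const_fun_def)
qed

theorem real_max_ideal_countable_Inter:
  assumes "real_max_ideal X M" "F \<subseteq> zero_set X ` M" "countable F" "F \<noteq> {}"
  shows "\<Inter>F \<in> zero_set X ` M"
proof -
  have "\<forall>n. \<exists>m\<in>M. zero_set X m = from_nat_into F n"
    using from_nat_into[OF assms(4)] assms(2) by blast
  then obtain fs where fs: "\<And>n. fs n \<in> M" and fs_zero: "\<And>n. zero_set X (fs n) = from_nat_into F n"
    by metis
  have "\<Inter>F = (\<Inter>n. zero_set X (fs n))"
    unfolding fs_zero range_from_nat_into[OF assms(4,3)] ..
  also have "\<dots> = zero_set X (dyadic_series fs)"
    by (auto simp: zero_set_def dyadic_series_eq_0_iff)
  finally show ?thesis
    using real_max_ideal_dyadic_series[OF assms(1) fs] by (rule image_eqI)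
qed

lemma max_ideal_upper_or_lower_level_set:
  assumes f: "f \<in> baire_one X"
  shows "{x \<in> topspace X. q \<le> f x} \<in> zero_set X ` M \<or> {x \<in> topspace X. f x \<le> q} \<in> zero_set X ` M"
proof -
  define d where "d x = f x - const_fun X q x" for x
  have d: "d \<in> baire_one X" unfolding d_def by (intro baire_one_diff f baire_one_const)
  have lower: "(\<lambda>x. min (d x) 0) \<in> baire_one X" and upper: "(\<lambda>x. max (d x) 0) \<in> baire_one X"
    by (auto intro!: baire_one_compose[OF d] continuous_intros)
  have "(\<lambda>x. min (d x) 0 * max (d x) 0) = (\<lambda>x. 0)"
    by (auto simp: min_def max_def)
  then have "(\<lambda>x. min (d x) 0 * max (d x) 0) \<in> M"
    using max_ideal_zero by simp
  then have "(\<lambda>x. min (d x) 0) \<in> M \<or> (\<lambda>x. max (d x) 0) \<in> M"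
    by (rule max_ideal_prime[OF lower upper])
  moreover have "zero_set X (\<lambda>x. min (d x) 0) = {x \<in> topspace X. q \<le> f x}"
    and "zero_set X (\<lambda>x. max (d x) 0) = {x \<in> topspace X. f x \<le> q}"
    by (auto simp: zero_set_def d_def const_fun_def min_def max_def)
  ultimately show ?thesis by (metis image_eqI)
qed

theorem countable_intersection_property_imp_real_max_ideal:
  assumes cip: "\<forall>F. F \<subseteq> zero_set X ` M \<and> countable F \<and> F \<noteq> {} \<longrightarrow> \<Inter>F \<noteq> {}"
  shows "real_max_ideal X M"
  unfolding real_max_ideal_iff
proof
  fix f assume f: "f \<in> baire_one X"
  define S where "S q = (if {x \<in> topspace X. q \<le> f x} \<in> zero_set X ` M
    then {x \<in> topspace X. q \<le> f x} else {x \<in> topspace X. f x \<le> q})" for q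
  have S: "S q \<in> zero_set X ` M" for q
    using max_ideal_upper_or_lower_level_set[OF f, of q] by (auto simp: S_def)
  have S_level: "S q = {x \<in> topspace X. q \<le> f x} \<or> S q = {x \<in> topspace X. f x \<le> q}" for q
    by (simp add: S_def)
  have S_countable: "countable (S ` \<rat>)" by (simp add: countable_rat)
  have f_constant: "f x = f y" if "x \<in> \<Inter>(S ` \<rat>)" "y \<in> \<Inter>(S ` \<rat>)" for x y
  proof (rule ccontr)
    assume "f x \<noteq> f y"
    then have "min (f x) (f y) < max (f x) (f y)" by linarith
    then obtain q where q: "q \<in> \<rat>" "min (f x) (f y) < q" "q < max (f x) (f y)"
      using Rats_dense_in_real by blast
    have "x \<in> S q" "y \<in> S q" using that q(1) by auto
    with S_level[of q] q(2,3) show False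
      by (auto simp: min_less_iff_disj less_max_iff_disj)
  qed
  have "S ` \<rat> \<subseteq> zero_set X ` M" "S ` \<rat> \<noteq> {}"
    using S Rats_0 by auto
  then obtain x0 where x0: "x0 \<in> \<Inter>(S ` \<rat>)"
    using cip S_countable by blast
  show "\<exists>c. (\<lambda>x. f x - const_fun X c x) \<in> M"
  proof (rule ccontr)
    assume "\<nexists>c. (\<lambda>x. f x - const_fun X c x) \<in> M"
    then have not_in: "(\<lambda>x. f x - const_fun X (f x0) x) \<notin> M" by blast
    have "(\<lambda>x. f x - const_fun X (f x0) x) \<in> baire_one X"
      by (intro baire_one_diff f baire_one_const)
    then obtain m h where m: "m \<in> M" and "h \<in> baire_one X"
      and e: "\<And>x. x \<in> topspace X \<Longrightarrow> m x + h x * (f x - const_fun X (f x0) x) = 1"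
      using max_ideal_comaximal not_in by blast
    have "\<Inter>(insert (zero_set X m) (S ` \<rat>)) \<noteq> {}"
      using m S S_countable by (intro cip[rule_format]) auto
    then obtain x where x: "x \<in> zero_set X m" "x \<in> \<Inter>(S ` \<rat>)" by auto
    then have "x \<in> topspace X" "m x = 0" "f x = f x0"
      using f_constant[OF _ x0] by (auto simp: zero_set_def)
    with e[of x] show False by (simp add: const_fun_def)
  qed
qed

end

theorem theorem4p26:
  fixes X :: "'a topology" and M :: "('a \<Rightarrow> real) set"
  assumes "maximalideal M (B1_ring X)"
  shows "(real_max_ideal X M \<longleftrightarrow>
            (\<forall>F. F \<subseteq> zero_set X ` M \<and> countable F \<and> F \<noteq> {} \<longrightarrow> \<Inter>F \<in> zero_set X ` M))
       \<and> (real_max_ideal X M \<longleftrightarrow>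
            (\<forall>F. F \<subseteq> zero_set X ` M \<and> countable F \<and> F \<noteq> {} \<longrightarrow> \<Inter>F \<noteq> {}))"
proof -
  let ?closed = "\<forall>F. F \<subseteq> zero_set X ` M \<and> countable F \<and> F \<noteq> {} \<longrightarrow> \<Inter>F \<in> zero_set X ` M"
  let ?cip = "\<forall>F. F \<subseteq> zero_set X ` M \<and> countable F \<and> F \<noteq> {} \<longrightarrow> \<Inter>F \<noteq> {}"
  have real_closed: "real_max_ideal X M \<Longrightarrow> ?closed"
    using real_max_ideal_countable_Inter[OF assms] by blast
  have "Z \<noteq> {}" if "Z \<in> zero_set X ` M" for Z
    using that max_ideal_has_zero[OF assms] by (force simp: zero_set_def)
  then have closed_cip: "?closed \<Longrightarrow> ?cip" by blast
  have cip_real: "?cip \<Longrightarrow> real_max_ideal X M"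
    by (rule countable_intersection_property_imp_real_max_ideal[OF assms])
  show ?thesis using real_closed closed_cip cip_real by argo
qed

end
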